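(* If $\mu\in\mathcal{L}$, then for each $x\in\mathbb{R}$ at most one element of the set $\{x+2\pi n : n\in\mathbb{Z}\}$ is an atom of $\mu$.
   Context: For a probability measure $\mu$ on $\mathbb{R}$, $G_\mu(z)=\int\frac{d\mu(x)}{z-x}$ and $F_\mu=1/G_\mu$ on the upper half-plane $\mathbb{C}^+$. $\mathcal{L}$ is the set of probability measures $\mu$ on $\mathbb{R}$ with $F_\mu(z+2\pi)=F_\mu(z)+2\pi$ for all $z\in\mathbb{C}^+$. *)

theory Defs
  imports "HOL-Probability.Probability"
begin

definition cauchy_transform :: "real measure \<Rightarrow> complex \<Rightarrow> complex" where
  "cauchy_transform M z = (\<integral>x. 1 / (z - complex_of_real x) \<partial>M)"

definition F_transform :: "real measure \<Rightarrow> complex \<Rightarrow> complex" where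
  "F_transform M z = 1 / cauchy_transform M z"

definition class_L :: "real measure \<Rightarrow> bool" where
  "class_L M \<longleftrightarrow> prob_space M \<and> sets M = sets borel \<and>
     (\<forall>z. Im z > 0 \<longrightarrow> F_transform M (z + 2 * complex_of_real pi) = F_transform M z + 2 * complex_of_real pi)"

definition is_atom :: "real measure \<Rightarrow> real \<Rightarrow> bool" where
  "is_atom M y \<longleftrightarrow> measure M {y} > 0"

end

theory Submission
  imports Defs
begin

text \<open>An atom of mass \<open>c\<close> at \<open>a\<close> forces \<open>|G(a + iy)| \<ge> c / y\<close>, since \<open>-Im G(a + iy)\<close> is the
  integral of the Poisson kernel, which equals \<open>1/y\<close> at \<open>a\<close>; hence \<open>|F(a + iy)| \<le> y / c\<close>.
  Periodicity gives \<open>F(z + 2\<pi>k) = F z + 2\<pi>k\<close> for all integers \<open>k\<close>. Two atoms at \<open>a\<close> and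
  \<open>a + 2\<pi>k\<close> with \<open>k \<noteq> 0\<close> would then give \<open>2\<pi> \<le> 2\<pi>|k| \<le> y/c\<^sub>1 + y/c\<^sub>2\<close>, which fails for
  \<open>y = min c\<^sub>1 c\<^sub>2\<close>.\<close>

lemma Im_inverse_Complex_minus_of_real:
  "Im (1 / (Complex a y - complex_of_real x)) = - (y / ((a - x)\<^sup>2 + y\<^sup>2))"
  by (simp add: Im_divide power2_eq_square)

lemma norm_inverse_Complex_minus_of_real_le:
  assumes "y > 0"
  shows "cmod (1 / (Complex a y - complex_of_real x)) \<le> 1 / y"
proof -
  have "\<bar>y\<bar> \<le> cmod (Complex a y - complex_of_real x)"
    using abs_Im_le_cmod[of "Complex a y - complex_of_real x"] by simp
  then show ?thesis
    using assms by (simp add: norm_divide divide_simps)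
qed

lemma atom_le_norm_cauchy_transform:
  assumes "finite_measure M" and sets: "sets M = sets borel" and y: "y > 0"
  shows "measure M {a} / y \<le> cmod (cauchy_transform M (Complex a y))"
proof -
  interpret finite_measure M by fact
  define g where "g x = 1 / (Complex a y - complex_of_real x)" for x
  define poisson where "poisson x = y / ((a - x)\<^sup>2 + y\<^sup>2)" for x
  have space: "space M = UNIV"
    using sets_eq_imp_space_eq[OF sets] by simp
  have "continuous_on UNIV g"
    unfolding g_def using y by (intro continuous_intros) (auto simp: complex_eq_iff)
  then have "g \<in> borel_measurable M"
    using borel_measurable_continuous_onI measurable_cong_sets[OF sets refl] by blast
  then have g_int: "integrable M g"
    using norm_inverse_Complex_minus_of_real_le[OF y]
    by (intro integrable_const_bound[where B = "1 / y"]) (auto simp: g_def)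
  have Im_g: "Im (g x) = - poisson x" for x
    by (simp add: g_def poisson_def Im_inverse_Complex_minus_of_real)
  have poisson_int: "integrable M poisson"
    using integrable_Im[OF g_int] by (simp add: Im_g)
  have indicator_int: "integrable M (\<lambda>x. indicator {a} x * (1 / y) :: real)"
    using sets by (intro integrable_mult_left integrable_real_indicator) (auto simp: less_top[symmetric])
  have "measure M {a} / y = (\<integral>x. indicator {a} x * (1 / y) \<partial>M)"
    using space by simp
  also have "\<dots> \<le> (\<integral>x. poisson x \<partial>M)"
    using y by (intro integral_mono[OF indicator_int poisson_int])
      (auto simp: poisson_def indicator_def power2_eq_square)
  also have "\<dots> = - (\<integral>x. Im (g x) \<partial>M)"
    by (simp add: Im_g)
  also have "\<dots> = - Im (cauchy_transform M (Complex a y))"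
    using g_int by (simp add: cauchy_transform_def g_def[symmetric])
  also have "\<dots> \<le> cmod (cauchy_transform M (Complex a y))"
    using abs_Im_le_cmod by (metis abs_le_D2)
  finally show ?thesis .
qed

lemma norm_F_transform_le_atom:
  assumes "finite_measure M" and "sets M = sets borel" and "y > 0" and c: "measure M {a} > 0"
  shows "cmod (F_transform M (Complex a y)) \<le> y / measure M {a}"
proof -
  have lower: "measure M {a} / y \<le> cmod (cauchy_transform M (Complex a y))"
    using atom_le_norm_cauchy_transform assms by blast
  moreover have "measure M {a} / y > 0"
    using c \<open>y > 0\<close> by simp
  ultimately have "inverse (cmod (cauchy_transform M (Complex a y))) \<le> inverse (measure M {a} / y)"
    by (rule le_imp_inverse_le)
  then show ?thesis
    by (simp add: F_transform_def norm_inverse divide_inverse mult.commute)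
qed

lemma class_L_F_transform_add_int_period:
  assumes L: "class_L M" and z: "Im z > 0"
  shows "F_transform M (z + 2 * pi * of_int k) = F_transform M z + 2 * pi * of_int k"
proof (induction k rule: int_induct[where k = 0])
  case base
  then show ?case by simp
next
  case (step1 i)
  have "Im (z + 2 * pi * of_int i) > 0"
    using z by simp
  then have "F_transform M (z + 2 * pi * of_int i + 2 * pi) = F_transform M (z + 2 * pi * of_int i) + 2 * pi"
    using L by (simp add: class_L_def)
  then show ?case
    using step1 by (simp add: algebra_simps)
next
  case (step2 i)
  have "Im (z + 2 * pi * of_int (i - 1)) > 0"
    using z by simp
  then have "F_transform M (z + 2 * pi * of_int (i - 1) + 2 * pi)
      = F_transform M (z + 2 * pi * of_int (i - 1)) + 2 * pi"
    using L by (simp add: class_L_def)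
  then show ?case
    using step2 by (simp add: algebra_simps)
qed

theorem corollary4p13:
  fixes M :: "real measure" and x :: real
  assumes "class_L M"
  shows "\<forall>m n :: int. is_atom M (x + 2 * pi * real_of_int m) \<and> is_atom M (x + 2 * pi * real_of_int n) \<longrightarrow> m = n"
proof (intro allI impI; erule conjE; rule ccontr)
  fix m n :: int
  assume atom_m: "is_atom M (x + 2 * pi * real_of_int m)"
    and atom_n: "is_atom M (x + 2 * pi * real_of_int n)" and "m \<noteq> n"
  define a where "a = x + 2 * pi * real_of_int m"
  define y where "y = min (measure M {a}) (measure M {a + 2 * pi * of_int (n - m)})"
  have M: "finite_measure M" "sets M = sets borel"
    using assms by (auto simp: class_L_def prob_space_def)
  have atoms: "measure M {a} > 0" "measure M {a + 2 * pi * of_int (n - m)} > 0"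
    using atom_m atom_n by (auto simp: is_atom_def a_def algebra_simps)
  then have "y > 0"
    by (simp add: y_def)
  have "cmod (F_transform M (Complex a y)) \<le> 1"
    "cmod (F_transform M (Complex (a + 2 * pi * of_int (n - m)) y)) \<le> 1"
    using norm_F_transform_le_atom[OF M \<open>y > 0\<close> atoms(1)] norm_F_transform_le_atom[OF M \<open>y > 0\<close> atoms(2)]
      atoms by (auto simp: y_def field_simps)
  moreover have "Complex (a + 2 * pi * of_int (n - m)) y = Complex a y + 2 * pi * of_int (n - m)"
    by (simp add: complex_eq_iff)
  ultimately have "cmod (2 * pi * of_int (n - m)) \<le> 2"
    using class_L_F_transform_add_int_period[OF assms, of "Complex a y" "n - m"] \<open>y > 0\<close>
      norm_triangle_ineq4[of "F_transform M (Complex a y + 2 * pi * of_int (n - m))" "F_transform M (Complex a y)"]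
    by simp
  moreover have "1 \<le> \<bar>real_of_int (n - m)\<bar>"
    using \<open>m \<noteq> n\<close> by linarith
  then have "2 * pi \<le> cmod (2 * pi * of_int (n - m))"
    using pi_gt_zero by (simp only: norm_of_real) (simp add: abs_mult)
  ultimately show False
    using pi_gt3 by linarith
qed

end
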